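(* Let $n\ge 4$ with $n\equiv 3\pmod 6$, and let $G=P_4\cup P_{n-5}\cup K_1$ (disjoint union of a path on $4$ vertices, a path on $n-5$ vertices, and an isolated vertex). Then $\operatorname{rank}(A_G+I_n)=\operatorname{rank}(A_{\overline G}+I_n)=n$.
   Context: All graphs are simple. $P_m$ is the path on $m$ vertices, $K_1$ a single vertex, and $\cup$ denotes disjoint union of graphs. $A_G$ denotes the $n\times n$ adjacency matrix of $G$, $\overline{G}$ the complement of $G$, $I_n$ the identity matrix, and rank is over $\mathbb{R}$. *)

theory Defs
  imports Main "Jordan_Normal_Form.DL_Rank"
begin

text \<open>A simple graph on the vertex set {0..<m} is represented by its number of
vertices m together with a symmetric irreflexive adjacency relation.\<close>

type_synonym graph = "nat \<times> (nat \<Rightarrow> nat \<Rightarrow> bool)"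

definition gverts :: "graph \<Rightarrow> nat" where "gverts G = fst G"
definition gadj :: "graph \<Rightarrow> nat \<Rightarrow> nat \<Rightarrow> bool" where "gadj G = snd G"

definition path_graph :: "nat \<Rightarrow> graph" where
  "path_graph m = (m, \<lambda>i j. i < m \<and> j < m \<and> (i + 1 = j \<or> j + 1 = i))"

definition K1 :: graph where "K1 = (1, \<lambda>i j. False)"

definition disj_union :: "graph \<Rightarrow> graph \<Rightarrow> graph" where
  "disj_union G H = (gverts G + gverts H,
     \<lambda>i j. (i < gverts G \<and> j < gverts G \<and> gadj G i j) \<or>
           (gverts G \<le> i \<and> gverts G \<le> j \<and> i < gverts G + gverts H \<and> j < gverts G + gverts H
            \<and> gadj H (i - gverts G) (j - gverts G)))"

definition complement :: "graph \<Rightarrow> graph" where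
  "complement G = (gverts G, \<lambda>i j. i < gverts G \<and> j < gverts G \<and> i \<noteq> j \<and> \<not> gadj G i j)"

definition adj_mat :: "graph \<Rightarrow> real mat" where
  "adj_mat G = mat (gverts G) (gverts G) (\<lambda>(i, j). if gadj G i j then 1 else 0)"

definition real_rank :: "real mat \<Rightarrow> nat" where
  "real_rank A = vec_space.rank (dim_row A) A"

end

theory Submission
  imports Defs
begin

text \<open>On a path, the rows of A + c I form a three-term recurrence, so a kernel vector
satisfies v k = p_k v 0 and the last row forces p_m v 0 = 0. For c = 1 the sequence p
has period 3 (1, -1, 0), for c = 0 it runs 1, 0, -1, 0. Kernels of disjoint unions are
computed componentwise, so A_G + I is nonsingular because 4 and n - 5 are both 1 mod 3.
For the complement, A + I equals J - A_G: the row of the isolated vertex forces the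
entries of a kernel vector to sum to 0, which leaves the rest of the vector in the kernel
of the adjacency matrix of P_4 and P_(n-5), trivial since both paths have even length.\<close>

lemma gverts_path_graph [simp]: "gverts (path_graph m) = m"
  and gadj_path_graph [simp]: "gadj (path_graph m) i j \<longleftrightarrow> i < m \<and> j < m \<and> (i + 1 = j \<or> j + 1 = i)"
  and gverts_K1 [simp]: "gverts K1 = 1"
  and gadj_K1 [simp]: "\<not> gadj K1 i j"
  and gverts_disj_union [simp]: "gverts (disj_union G H) = gverts G + gverts H"
  by (simp_all add: path_graph_def K1_def disj_union_def gverts_def gadj_def)

lemma gadj_disj_union:
  "gadj (disj_union G H) i j \<longleftrightarrow>
     (i < gverts G \<and> j < gverts G \<and> gadj G i j) \<or>
     (gverts G \<le> i \<and> gverts G \<le> j \<and> i < gverts G + gverts H \<and> j < gverts G + gverts H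
      \<and> gadj H (i - gverts G) (j - gverts G))"
  by (simp add: disj_union_def gadj_def gverts_def)

definition nbr_sum :: "graph \<Rightarrow> (nat \<Rightarrow> real) \<Rightarrow> nat \<Rightarrow> real" where
  "nbr_sum G v i = (\<Sum>j\<in>{0..<gverts G}. if gadj G i j then v j else 0)"

definition adj_shift_injective :: "real \<Rightarrow> graph \<Rightarrow> bool" where
  "adj_shift_injective c G \<longleftrightarrow>
     (\<forall>v. (\<forall>i<gverts G. c * v i + nbr_sum G v i = 0) \<longrightarrow> (\<forall>i<gverts G. v i = 0))"

lemma adj_shift_injectiveI:
  assumes "\<And>v i. (\<And>i. i < gverts G \<Longrightarrow> c * v i + nbr_sum G v i = 0) \<Longrightarrow> i < gverts G \<Longrightarrow> v i = 0"
  shows "adj_shift_injective c G"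
  using assms unfolding adj_shift_injective_def by blast

lemma adj_shift_injectiveD:
  "adj_shift_injective c G \<Longrightarrow> (\<And>i. i < gverts G \<Longrightarrow> c * v i + nbr_sum G v i = 0) \<Longrightarrow> i < gverts G \<Longrightarrow> v i = 0"
  unfolding adj_shift_injective_def by blast

lemma nbr_sum_disj_union_left:
  assumes "i < gverts G"
  shows "nbr_sum (disj_union G H) v i = nbr_sum G v i"
proof -
  let ?a = "gverts G" and ?b = "gverts H"
  have "nbr_sum (disj_union G H) v i =
      (\<Sum>j\<in>{0..<?a}. if gadj (disj_union G H) i j then v j else 0)
    + (\<Sum>j\<in>{?a..<?a + ?b}. if gadj (disj_union G H) i j then v j else 0)"
    unfolding nbr_sum_def by (simp add: sum.atLeastLessThan_concat)
  also have "\<dots> = nbr_sum G v i"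
    using assms unfolding nbr_sum_def by (simp add: gadj_disj_union)
  finally show ?thesis .
qed

lemma nbr_sum_disj_union_right:
  assumes "i < gverts H"
  shows "nbr_sum (disj_union G H) v (gverts G + i) = nbr_sum H (\<lambda>j. v (gverts G + j)) i"
proof -
  let ?a = "gverts G" and ?b = "gverts H"
  have "nbr_sum (disj_union G H) v (?a + i) =
      (\<Sum>j\<in>{0..<?a}. if gadj (disj_union G H) (?a + i) j then v j else 0)
    + (\<Sum>j\<in>{0 + ?a..<?b + ?a}. if gadj (disj_union G H) (?a + i) j then v j else 0)"
    unfolding nbr_sum_def by (simp add: sum.atLeastLessThan_concat add.commute)
  also have "\<dots> = nbr_sum H (\<lambda>j. v (?a + j)) i"
    unfolding nbr_sum_def sum.shift_bounds_nat_ivl using assms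
    by (auto simp: gadj_disj_union add.commute intro!: sum.cong)
  finally show ?thesis .
qed

lemma adj_shift_injective_disj_union:
  assumes G: "adj_shift_injective c G" and H: "adj_shift_injective c H"
  shows "adj_shift_injective c (disj_union G H)"
proof (rule adj_shift_injectiveI)
  fix v i
  assume eq: "\<And>i. i < gverts (disj_union G H) \<Longrightarrow> c * v i + nbr_sum (disj_union G H) v i = 0"
    and i: "i < gverts (disj_union G H)"
  show "v i = 0"
  proof (cases "i < gverts G")
    case True
    show ?thesis
    proof (rule adj_shift_injectiveD[OF G _ True])
      fix j assume "j < gverts G"
      then show "c * v j + nbr_sum G v j = 0"
        using eq[of j] nbr_sum_disj_union_left[of j G H v] by simp
    qed
  next
    case False
    then obtain k where k: "i = gverts G + k" "k < gverts H"
      using i by (metis add_less_cancel_left gverts_disj_union le_add_diff_inverse not_less)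
    have "(\<lambda>j. v (gverts G + j)) k = 0"
    proof (rule adj_shift_injectiveD[OF H _ k(2)])
      fix j assume "j < gverts H"
      then show "c * v (gverts G + j) + nbr_sum H (\<lambda>j. v (gverts G + j)) j = 0"
        using eq[of "gverts G + j"] nbr_sum_disj_union_right[of j H G v] by simp
    qed
    then show ?thesis using k by simp
  qed
qed

lemma adj_shift_injective_K1: "c \<noteq> 0 \<Longrightarrow> adj_shift_injective c K1"
  by (rule adj_shift_injectiveI) (simp add: nbr_sum_def)

lemma nbr_sum_path_graph:
  assumes "i < m"
  shows "nbr_sum (path_graph m) v i = (if 0 < i then v (i - 1) else 0) + (if i + 1 < m then v (i + 1) else 0)"
proof -
  have "nbr_sum (path_graph m) v i =
      (\<Sum>j\<in>{0..<m}. (if j = i - 1 \<and> 0 < i then v j else 0) + (if j = i + 1 then v j else 0))"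
    unfolding nbr_sum_def using assms by (intro sum.cong) auto
  also have "\<dots> = (if 0 < i then v (i - 1) else 0) + (if i + 1 < m then v (i + 1) else 0)"
    using assms by (simp add: sum.distrib sum.delta)
  finally show ?thesis .
qed

text \<open>path_kernel_seq c k = (-1)^k det (A_{P_k} + c I).\<close>

fun path_kernel_seq :: "real \<Rightarrow> nat \<Rightarrow> real" where
  "path_kernel_seq c 0 = 1"
| "path_kernel_seq c (Suc 0) = - c"
| "path_kernel_seq c (Suc (Suc k)) = - c * path_kernel_seq c (Suc k) - path_kernel_seq c k"

lemma path_kernel_vector:
  assumes eq: "\<And>i. i < m \<Longrightarrow> c * v i + nbr_sum (path_graph m) v i = 0"
  shows "k < m \<Longrightarrow> v k = path_kernel_seq c k * v 0"
proof (induction k rule: induct_nat_012)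
  case 1
  then show ?case using eq[of 0] by (simp add: nbr_sum_path_graph)
next
  case (ge2 j)
  then have "v (Suc (Suc j)) = - c * v (Suc j) - v j"
    using eq[of "Suc j"] by (simp add: nbr_sum_path_graph)
  also have "\<dots> = path_kernel_seq c (Suc (Suc j)) * v 0"
    using ge2 by (simp add: algebra_simps)
  finally show ?case .
qed simp

lemma adj_shift_injective_path_graph:
  assumes "path_kernel_seq c m \<noteq> 0"
  shows "adj_shift_injective c (path_graph m)"
proof (rule adj_shift_injectiveI)
  fix v i
  assume "\<And>i. i < gverts (path_graph m) \<Longrightarrow> c * v i + nbr_sum (path_graph m) v i = 0"
    and "i < gverts (path_graph m)"
  then have eq: "\<And>i. i < m \<Longrightarrow> c * v i + nbr_sum (path_graph m) v i = 0" and i: "i < m"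
    by simp_all
  note kernel = path_kernel_vector[OF eq]
  consider "m = Suc 0" | j where "m = Suc (Suc j)"
    using i by (cases m; cases "m - 1") auto
  then have "path_kernel_seq c m * v 0 = 0"
  proof cases
    case 1
    then show ?thesis using eq[of 0] by (simp add: nbr_sum_path_graph)
  next
    case (2 j)
    then have "c * v (Suc j) + v j = 0"
      using eq[of "Suc j"] by (simp add: nbr_sum_path_graph)
    then show ?thesis using 2 kernel[where k=j] kernel[where k="Suc j"] by (simp add: algebra_simps)
  qed
  then show "v i = 0" using assms i kernel[where k=i] by simp
qed

lemma path_kernel_seq_1:
  "path_kernel_seq 1 k = (if k mod 3 = 0 then 1 else if k mod 3 = 1 then -1 else 0)"
  by (induction "1::real" k rule: path_kernel_seq.induct) (auto simp: mod_Suc)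

lemma path_kernel_seq_0:
  "path_kernel_seq 0 k = (if even k then (-1) ^ (k div 2) else 0)"
  by (induction "0::real" k rule: path_kernel_seq.induct) auto

lemma adj_shift_injective_1_path_graph:
  "m mod 3 \<noteq> 2 \<Longrightarrow> adj_shift_injective 1 (path_graph m)"
  by (rule adj_shift_injective_path_graph) (simp add: path_kernel_seq_1, presburger)

lemma adj_shift_injective_0_path_graph:
  "even m \<Longrightarrow> adj_shift_injective 0 (path_graph m)"
  by (rule adj_shift_injective_path_graph) (simp add: path_kernel_seq_0)

lemma gverts_complement [simp]: "gverts (complement G) = gverts G"
  by (simp add: complement_def gverts_def)

lemma adj_mat_plus_1_mult_vec_nth:
  assumes "v \<in> carrier_vec (gverts G)" "i < gverts G"
  shows "((adj_mat G + 1\<^sub>m (gverts G)) *\<^sub>v v) $ i = v $ i + nbr_sum G (($) v) i"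
proof -
  have "((adj_mat G + 1\<^sub>m (gverts G)) *\<^sub>v v) $ i =
      (\<Sum>j\<in>{0..<gverts G}. ((if gadj G i j then 1 else 0) + (if j = i then 1 else 0)) * v $ j)"
    using assms by (simp add: adj_mat_def scalar_prod_def)
  also have "\<dots> = (\<Sum>j\<in>{0..<gverts G}. (if gadj G i j then v $ j else 0) + (if i = j then v $ j else 0))"
    by (intro sum.cong) (auto simp: distrib_right)
  finally show ?thesis
    using assms(2) by (simp add: sum.distrib nbr_sum_def)
qed

lemma complement_adj_mat_plus_1_mult_vec_nth:
  assumes "irreflp (gadj G)" "v \<in> carrier_vec (gverts G)" "i < gverts G"
  shows "((adj_mat (complement G) + 1\<^sub>m (gverts G)) *\<^sub>v v) $ i =
    (\<Sum>j\<in>{0..<gverts G}. v $ j) - nbr_sum G (($) v) i"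
proof -
  have "((adj_mat (complement G) + 1\<^sub>m (gverts G)) *\<^sub>v v) $ i =
      (\<Sum>j\<in>{0..<gverts G}. v $ j - (if gadj G i j then v $ j else 0))"
    using assms
    by (auto simp: adj_mat_def scalar_prod_def complement_def gadj_def gverts_def irreflp_def
        intro!: sum.cong)
  then show ?thesis
    by (simp add: sum_subtractf nbr_sum_def)
qed

lemma real_rank_eq_if_kernel_trivial:
  fixes M :: "real mat"
  assumes "M \<in> carrier_mat n n"
    and "\<And>v. v \<in> carrier_vec n \<Longrightarrow> M *\<^sub>v v = 0\<^sub>v n \<Longrightarrow> v = 0\<^sub>v n"
  shows "real_rank M = n"
proof -
  have "det M \<noteq> 0"
    using det_0_iff_vec_prod_zero_field[OF assms(1)] assms(2) by blast
  then have "vec_space.rank n M = n"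
    using vec_space.low_rank_det_zero[OF assms(1)] by blast
  then show ?thesis
    unfolding real_rank_def using assms(1) by simp
qed

lemma real_rank_adj_mat_plus_1:
  assumes "adj_shift_injective 1 G"
  shows "real_rank (adj_mat G + 1\<^sub>m (gverts G)) = gverts G"
proof (rule real_rank_eq_if_kernel_trivial)
  show "adj_mat G + 1\<^sub>m (gverts G) \<in> carrier_mat (gverts G) (gverts G)"
    by (simp add: adj_mat_def)
next
  fix v :: "real vec"
  assume v: "v \<in> carrier_vec (gverts G)"
    and kernel: "(adj_mat G + 1\<^sub>m (gverts G)) *\<^sub>v v = 0\<^sub>v (gverts G)"
  have "1 * v $ i + nbr_sum G (($) v) i = 0" if "i < gverts G" for i
    using arg_cong[OF kernel, of "\<lambda>w. w $ i"] adj_mat_plus_1_mult_vec_nth[OF v that] that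
    by simp
  then show "v = 0\<^sub>v (gverts G)"
    using adj_shift_injectiveD[OF assms] v by (intro eq_vecI) auto
qed

lemma real_rank_complement_disj_union_K1:
  assumes "irreflp (gadj H)" and H: "adj_shift_injective 0 H"
  shows "real_rank (adj_mat (complement (disj_union H K1)) + 1\<^sub>m (gverts H + 1)) = gverts H + 1"
proof -
  let ?G = "disj_union H K1" and ?N = "gverts H"
  have "irreflp (gadj ?G)"
    using assms(1) by (simp add: irreflp_def gadj_disj_union)
  show ?thesis
  proof (rule real_rank_eq_if_kernel_trivial)
    show "adj_mat (complement ?G) + 1\<^sub>m (?N + 1) \<in> carrier_mat (?N + 1) (?N + 1)"
      by (simp add: adj_mat_def)
  next
    fix v :: "real vec"
    assume v: "v \<in> carrier_vec (?N + 1)"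
      and kernel: "(adj_mat (complement ?G) + 1\<^sub>m (?N + 1)) *\<^sub>v v = 0\<^sub>v (?N + 1)"
    let ?f = "($) v"
    have eq: "(\<Sum>j\<in>{0..<?N + 1}. ?f j) = nbr_sum ?G ?f i" if "i \<le> ?N" for i
      using arg_cong[OF kernel, of "\<lambda>w. w $ i"] that v
        complement_adj_mat_plus_1_mult_vec_nth[OF \<open>irreflp (gadj ?G)\<close>, of v i]
      by simp
    have "nbr_sum ?G ?f ?N = 0" \<comment> \<open>the vertex of K1 is isolated\<close>
      using nbr_sum_disj_union_right[of 0 K1 H ?f] by (simp add: nbr_sum_def)
    then have sum_0: "(\<Sum>j\<in>{0..<?N + 1}. ?f j) = 0"
      using eq[of ?N] by simp
    have "0 * ?f i + nbr_sum H ?f i = 0" if "i < ?N" for i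
      using eq[of i] sum_0 nbr_sum_disj_union_left[OF that] that by simp
    then have left: "?f i = 0" if "i < ?N" for i
      using adj_shift_injectiveD[OF H] that by blast
    then have "?f ?N = 0"
      using sum_0 by simp
    then show "v = 0\<^sub>v (?N + 1)"
      using left v by (intro eq_vecI) (auto simp: less_Suc_eq)
  qed
qed

theorem proposition5p8:
  fixes n :: nat
  assumes "n \<ge> 4" and "n mod 6 = 3"
  defines "G \<equiv> disj_union (disj_union (path_graph 4) (path_graph (n - 5))) K1"
  shows "real_rank (adj_mat G + 1\<^sub>m n) = n \<and> real_rank (adj_mat (complement G) + 1\<^sub>m n) = n"
proof -
  have "\<exists>r. n - 5 = 6 * r + 4"
    using assms(1,2) by presburger
  then obtain r where r: "n - 5 = 6 * r + 4" ..
  then have paths: "(n - 5) mod 3 = 1" "even (n - 5)"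
    by presburger+
  define H where "H = disj_union (path_graph 4) (path_graph (n - 5))"
  have G: "G = disj_union H K1"
    unfolding G_def H_def ..
  have size: "gverts H + 1 = n" "gverts G = n"
    using r unfolding G H_def by simp_all
  have "adj_shift_injective 1 G"
    unfolding G_def using paths
    by (intro adj_shift_injective_disj_union adj_shift_injective_1_path_graph adj_shift_injective_K1) simp_all
  then have "real_rank (adj_mat G + 1\<^sub>m n) = n"
    using real_rank_adj_mat_plus_1 size(2) by metis
  moreover have "adj_shift_injective 0 H"
    unfolding H_def using paths
    by (intro adj_shift_injective_disj_union adj_shift_injective_0_path_graph) simp_all
  moreover have "irreflp (gadj H)"
    by (simp add: H_def irreflp_def gadj_disj_union)
  ultimately show ?thesis
    using real_rank_complement_disj_union_K1 size(1) unfolding G by metis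
qed

end
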